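(* Let $\mathcal I$ be a decreasing information set of length $n=2^m$ and let $M$ be an $m\times m$ upper-triangular binary matrix such that $\pi=\varphi(M)$ is an automorphism of $C(\mathcal I)$. For $i\in\{0,1\}$ let $\mathcal I_i=\mathcal I(\mathrm{Ind}_m(a_m=i))$ (an information set of length $2^{m-1}$), and let $\pi'=\varphi(M([1,m-1],[1,m-1]))$, a permutation of $\{0,\dots,2^{m-1}-1\}$. If $\pi$ commutes with $\mathrm{SC}_{\mathcal I}$, then $\pi'$ commutes with both $\mathrm{SC}_{\mathcal I_1}$ and $\mathrm{SC}_{\mathcal I_0}$.
   Context: Setup. Let $m\ge 1$, $n=2^m$. For any $k\ge1$, each index $z\in\{0,\dots,2^k-1\}$ is identified with the vector $a(z)=(a_1,\dots,a_k)^T\in\mathbb F_2^k$ determined by $z=\sum_{i=1}^k 2^{i-1}(1-a_i)$ (i.e. $a$ is the binary expansion of $2^k-1-z$, $a_1$ least significant), and with the monomial $x_1^{a_1}\cdots x_k^{a_k}$. Let $F=\begin{bmatrix}1&0\\1&1\end{bmatrix}$, $G_k=F^{\otimes k}$ with rows indexed $0,\dots,2^k-1$. For an information set $\mathcal I\subseteq\{0,\dots,2^k-1\}$ (equivalently a subset of $\mathbb F_2^k$), $C(\mathcal I)$ is the binary code spanned by the rows of $G_k$ with index in $\mathcal I$, and $\mathcal F$ is the complement of $\mathcal I$. Partial order on monomials: for monomials of equal degree, $x_{i_1}\cdots x_{i_t}\preccurlyeq x_{j_1}\cdots x_{j_t}$ (with $i_1<\dots<i_t$, $j_1<\dots<j_t$)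 iff $i_l\le j_l$ for all $l$; in general $f\preccurlyeq g$ iff $f\preccurlyeq g'$ for some divisor $g'$ of $g$ of the same degree as $f$. $\mathcal I$ is decreasing if $f\in\mathcal I$ and $g\preccurlyeq f$ imply $g\in\mathcal I$. A permutation $\pi$ of indices acts on vectors by $\pi(c)=(c_{\pi(0)},\dots,c_{\pi(N-1)})$; it is an automorphism of a code $C$ if $\pi(C)=C$. For $N\in GL_k(\mathbb F_2)$, $\varphi(N)$ is the permutation of $\{0,\dots,2^k-1\}$ sending $z$ to the index $z'$ with $a(z')=Na(z)$. A binary matrix $M$ is upper-triangular if $M(i,i)=1$ and $M(i,j)=0$ for $j<i$. $M([a,b],[c,d])$ is the submatrix with rows $a..b$ and columns $c..d$. SC decoding (length $2^k$). Let $f(x,y)=\log\frac{e^{x+y}+1}{e^x+e^y}$ and $g(u,x,y)=(-1)^ux+y$. The map $\mathrm{SC}_{\mathcal I}:\mathbb R^{2^k}\to\mathbb F_2^{2^k}$: given $y$ put $L_{i,k}=y_i$. For $0\le t<k$ and each $i$ with $\lfloor i/2^t\rfloor$ even: $L_{i,t}=f(L_{i,t+1},L_{i+2^t,t+1})$, $L_{i+2^t,t}=g(u_{i,t},L_{i,t+1},L_{i+2^t,t+1})$, $u_{i,t+1}=u_{i,t}\oplus u_{i+2^t,t}$, $u_{i+2^t,t+1}=u_{i+2^t,t}$. At stage $0$, $u_{i,0}=0$ if $i\in\mathcal F$ or $L_{i,0}\ge 0$, and $1$ otherwise. Quantities are computed in successive-cancellation order (stage-0 decisions for $i=0,1,\dots$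 in increasing order, each quantity computed once its inputs are available). The output is $(u_{i,k})_i$. A permutation $\pi$ commutes with $\mathrm{SC}_{\mathcal I}$ if $\mathrm{SC}_{\mathcal I}(\pi(y))=\pi(\mathrm{SC}_{\mathcal I}(y))$ for all $y$. Subcodes. For $i_1<\dots<i_t$ in $\{1,\dots,m\}$ and $c_{i_j}\in\mathbb F_2$, $\mathrm{Ind}_m(a_{i_1}=c_{i_1},\dots,a_{i_t}=c_{i_t})=\{a\in\mathbb F_2^m: a_{i_j}=c_{i_j}\ \forall j\}$. For such a set $A$, $\mathcal I(A)\subseteq\mathbb F_2^{m-t}$ is the set of vectors obtained from the elements of $\mathcal I\cap A$ by deleting coordinates $i_1,\dots,i_t$, regarded as an information set of length $2^{m-t}$. *)

theory Defs
  imports "HOL-Analysis.Analysis"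
begin

(* Vectors in F_2^k are functions nat => bool, coordinates 1..k (False outside).
   a(z): a_i = 1 - (bit i-1 of z), i.e. a is the binary expansion of 2^k-1-z. *)
definition avec :: "nat \<Rightarrow> nat \<Rightarrow> (nat \<Rightarrow> bool)" where
  "avec k z = (\<lambda>i. i \<in> {1..k} \<and> \<not> bit z (i - 1))"

definition index_of :: "nat \<Rightarrow> (nat \<Rightarrow> bool) \<Rightarrow> nat" where
  "index_of k a = (\<Sum>i=1..k. 2 ^ (i - 1) * (if a i then 0 else 1))"

(* the monomial x^a(z) as the set of its variables *)
definition supp :: "nat \<Rightarrow> nat \<Rightarrow> nat set" where
  "supp k z = {i \<in> {1..k}. avec k z i}"

(* partial order on (squarefree) monomials, given as sets of variable indices;
   divisors of a monomial correspond to subsets *)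
definition mono_le :: "nat set \<Rightarrow> nat set \<Rightarrow> bool" where
  "mono_le S T = (\<exists>T' \<subseteq> T. card T' = card S \<and>
      (\<forall>l < card S. sorted_list_of_set S ! l \<le> sorted_list_of_set T' ! l))"

definition info_set :: "nat \<Rightarrow> nat set \<Rightarrow> bool" where
  "info_set k I = (I \<subseteq> {..<2^k})"

definition decreasing :: "nat \<Rightarrow> nat set \<Rightarrow> bool" where
  "decreasing k I = (\<forall>z \<in> I. \<forall>w < 2^k. mono_le (supp k w) (supp k z) \<longrightarrow> w \<in> I)"

(* F = [[1,0],[1,1]] *)
definition Fker :: "nat \<Rightarrow> nat \<Rightarrow> bool" where
  "Fker a b = (b \<le> a)"

(* G_k = F^{\<otimes>k}, G_{k+1} = F \<otimes> G_k *)
fun Gk :: "nat \<Rightarrow> nat \<Rightarrow> nat \<Rightarrow> bool" where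
  "Gk 0 r c = True"
| "Gk (Suc k) r c = (Fker (r div 2^k) (c div 2^k) \<and> Gk k (r mod 2^k) (c mod 2^k))"

(* C(I): the F_2-span of the rows of G_k with index in I *)
definition code :: "nat \<Rightarrow> nat set \<Rightarrow> (nat \<Rightarrow> bool) set" where
  "code k I = {c. \<exists>u. (\<forall>r. u r \<longrightarrow> r \<in> I) \<and>
      c = (\<lambda>j. j < 2^k \<and> odd (card {r \<in> {..<2^k}. u r \<and> Gk k r j}))}"

definition perm_vec :: "nat \<Rightarrow> (nat \<Rightarrow> nat) \<Rightarrow> (nat \<Rightarrow> 'a) \<Rightarrow> (nat \<Rightarrow> 'a)" where
  "perm_vec N p c = (\<lambda>i. if i < N then c (p i) else c i)"

definition is_automorphism :: "nat \<Rightarrow> (nat \<Rightarrow> nat) \<Rightarrow> (nat \<Rightarrow> bool) set \<Rightarrow> bool" where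
  "is_automorphism N p C = (perm_vec N p ` C = C)"

(* matrices over F_2 as nat => nat => bool, rows/columns indexed 1..k *)
definition matvec :: "nat \<Rightarrow> (nat \<Rightarrow> nat \<Rightarrow> bool) \<Rightarrow> (nat \<Rightarrow> bool) \<Rightarrow> (nat \<Rightarrow> bool)" where
  "matvec k N a = (\<lambda>i. i \<in> {1..k} \<and> odd (card {j \<in> {1..k}. N i j \<and> a j}))"

definition phi :: "nat \<Rightarrow> (nat \<Rightarrow> nat \<Rightarrow> bool) \<Rightarrow> nat \<Rightarrow> nat" where
  "phi k N z = index_of k (matvec k N (avec k z))"

definition upper_triangular :: "nat \<Rightarrow> (nat \<Rightarrow> nat \<Rightarrow> bool) \<Rightarrow> bool" where
  "upper_triangular k M = (\<forall>i \<in> {1..k}. M i i \<and> (\<forall>j \<in> {1..k}. j < i \<longrightarrow> \<not> M i j))"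

(* I(Ind_m(a_m = c)): elements of I with a_m = c, coordinate m deleted *)
definition sub_info :: "nat \<Rightarrow> nat set \<Rightarrow> bool \<Rightarrow> nat set" where
  "sub_info m I c = {index_of (m - 1) (avec m z) | z. z \<in> I \<and> avec m z m = c}"

definition sc_f :: "real \<Rightarrow> real \<Rightarrow> real" where
  "sc_f x y = ln ((exp (x + y) + 1) / (exp x + exp y))"

definition sc_g :: "bool \<Rightarrow> real \<Rightarrow> real \<Rightarrow> real" where
  "sc_g u x y = (if u then - x else x) + y"

(* L i t = L_{i,t},  u i t = u_{i,t} (True = 1); all equations of the SC schedule *)
definition sc_system :: "nat \<Rightarrow> nat set \<Rightarrow> (nat \<Rightarrow> real) \<Rightarrow>
    (nat \<Rightarrow> nat \<Rightarrow> real) \<Rightarrow> (nat \<Rightarrow> nat \<Rightarrow> bool) \<Rightarrow> bool" where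
  "sc_system k I y L u =
     ((\<forall>i < 2^k. L i k = y i) \<and>
      (\<forall>t < k. \<forall>i < 2^k. even (i div 2^t) \<longrightarrow>
          L i t = sc_f (L i (t+1)) (L (i + 2^t) (t+1)) \<and>
          L (i + 2^t) t = sc_g (u i t) (L i (t+1)) (L (i + 2^t) (t+1)) \<and>
          u i (t+1) = (u i t \<noteq> u (i + 2^t) t) \<and>
          u (i + 2^t) (t+1) = u (i + 2^t) t) \<and>
      (\<forall>i < 2^k. u i 0 = (i \<in> I \<and> L i 0 < 0)))"

(* SC_I(y) = (u_{i,k})_i; the quantities are uniquely determined by the schedule *)
definition SC :: "nat \<Rightarrow> nat set \<Rightarrow> (nat \<Rightarrow> real) \<Rightarrow> (nat \<Rightarrow> bool)" where
  "SC k I y = (\<lambda>i. i < 2^k \<and> (THE b. \<exists>L u. sc_system k I y L u \<and> u i k = b))"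

definition commutes_SC :: "nat \<Rightarrow> nat set \<Rightarrow> (nat \<Rightarrow> nat) \<Rightarrow> bool" where
  "commutes_SC k I p = (\<forall>y. SC k I (perm_vec (2^k) p y) = perm_vec (2^k) p (SC k I y))"

end

theory Submission
  imports Defs
begin

text \<open>SC decoding of length \<open>2^(k+1)\<close> is SC decoding of the lower half on the \<open>f\<close>-combined
  LLRs, followed by SC decoding of the upper half, with information set
  \<open>{j. j + 2^k \<in> I}\<close>, on \<open>g\<close>-combined LLRs that depend on the lower decisions. Under the index
  convention \<open>a(z)\<close> the lower half is \<open>a\<^sub>m = 1\<close> and the upper half \<open>a\<^sub>m = 0\<close>, so \<open>\<I>\<^sub>1\<close> is the lower
  and \<open>\<I>\<^sub>0\<close> the upper part of \<open>\<I>\<close>. An upper-triangular \<open>M\<close> fixes \<open>a\<^sub>m\<close>, hence \<open>\<phi>(M)\<close> maps each half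
  to itself and acts on the upper half as \<open>\<pi>'\<close>; so commutation of \<open>\<pi>\<close> with \<open>SC\<^sub>\<I>\<close> yields
  commutation of \<open>\<pi>'\<close> with every map "input \<open>\<mapsto>\<close> upper half of the output of \<open>SC\<^sub>\<I>\<close>".

  For \<open>\<I>\<^sub>0\<close>, inputs vanishing on the lower half make this map equal to \<open>SC\<^sub>\<I>\<^sub>0\<close> on the upper half.
  For \<open>\<I>\<^sub>1\<close>, put a large constant on the lower half and choose the upper half so that the
  \<open>f\<close>-combined LLRs are an arbitrary \<open>w\<close> while the \<open>g\<close>-combined LLRs carry the signs of the lower
  decisions \<open>SC\<^sub>\<I>\<^sub>1(w)\<close>. As \<open>\<I>\<close> is decreasing, \<open>\<I>\<^sub>1 \<subseteq> \<I>\<^sub>0\<close>, and the upper decoder reproduces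
  these decisions.\<close>

lemma div_add_pow2: "t < k \<Longrightarrow> (i + 2^k) div (2::nat)^t = i div 2^t + 2^(k-t)"
proof -
  assume "t < k"
  then have "(2::nat)^k = 2^(k-t) * 2^t" by (simp add: power_add[symmetric])
  then show ?thesis by simp
qed

lemma even_div_add_pow2: "t < k \<Longrightarrow> even ((i + 2^k) div (2::nat)^t) \<longleftrightarrow> even (i div 2^t)"
  by (simp add: div_add_pow2)

lemma add_pow2_less:
  assumes "t < k" "i < 2^k" "even (i div (2::nat)^t)"
  shows "i + 2^t < 2^k"
proof -
  have split: "(2::nat)^k = 2^(k-t) * 2^t" using assms(1) by (simp add: power_add[symmetric])
  have "i div 2^t < 2^(k-t)" using assms(2) split by (simp add: less_mult_imp_div_less)
  moreover have "even ((2::nat)^(k-t))" using assms(1) by simp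
  ultimately have "i div 2^t + 1 < 2^(k-t)" using assms(3)
    by (metis dvd_add_right_iff le_neq_implies_less odd_one Suc_eq_plus1 Suc_leI)
  then have "(i + 2^t) div 2^t < 2^(k-t)" by simp
  then have "i + 2^t < 2^(k-t) * 2^t" by (rule div_less_iff_less_mult[THEN iffD1, rotated]) simp
  then show ?thesis using split by linarith
qed

lemma less_pow2_Suc_cases:
  assumes "(i::nat) < 2^Suc k"
  obtains "i < 2^k" | j where "j < 2^k" "i = j + 2^k"
  using assms by (cases "i < 2^k") (auto intro: that(2)[of "i - 2^k"])

lemma less_pow2_if_even_div: "(i::nat) < 2^Suc k \<Longrightarrow> even (i div 2^k) \<Longrightarrow> i < 2^k"
  by (cases rule: less_pow2_Suc_cases) auto

lemma bit_add_pow2_low: "n < k \<Longrightarrow> bit ((i::nat) + 2^k) n = bit i n"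
  by (simp add: bit_iff_odd div_add_pow2)

lemma bit_add_pow2_top: "(i::nat) < 2^k \<Longrightarrow> bit (i + 2^k) k"
  by (simp add: bit_iff_odd)

lemma not_bit_less_pow2: "(i::nat) < 2^k \<Longrightarrow> \<not> bit i k"
  by (simp add: bit_iff_odd)

section \<open>Recursive structure of SC decoding\<close>

lemma sc_system_cong:
  "sc_system k I y L u \<Longrightarrow> (\<forall>i<2^k. y i = y' i) \<Longrightarrow> (\<forall>i<2^k. i \<in> I \<longleftrightarrow> i \<in> I') \<Longrightarrow>
   sc_system k I' y' L u"
  unfolding sc_system_def by auto

lemma sc_systemI:
  assumes "\<And>i. i < 2^k \<Longrightarrow> L i k = y i"
    and "\<And>t i. t < k \<Longrightarrow> i < 2^k \<Longrightarrow> even (i div 2^t) \<Longrightarrow>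
          L i t = sc_f (L i (t+1)) (L (i + 2^t) (t+1)) \<and>
          L (i + 2^t) t = sc_g (u i t) (L i (t+1)) (L (i + 2^t) (t+1)) \<and>
          u i (t+1) = (u i t \<noteq> u (i + 2^t) t) \<and>
          u (i + 2^t) (t+1) = u (i + 2^t) t"
    and "\<And>i. i < 2^k \<Longrightarrow> u i 0 = (i \<in> I \<and> L i 0 < 0)"
  shows "sc_system k I y L u"
  unfolding sc_system_def using assms by blast

lemma sc_system_input: "sc_system k I y L u \<Longrightarrow> i < 2^k \<Longrightarrow> L i k = y i"
  unfolding sc_system_def by blast

lemma sc_system_decision: "sc_system k I y L u \<Longrightarrow> i < 2^k \<Longrightarrow> u i 0 = (i \<in> I \<and> L i 0 < 0)"
  unfolding sc_system_def by blast

lemma sc_system_stage: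
  assumes "sc_system k I y L u" "t < k" "i < 2^k" "even (i div 2^t)"
  shows "L i t = sc_f (L i (t+1)) (L (i + 2^t) (t+1)) \<and>
    L (i + 2^t) t = sc_g (u i t) (L i (t+1)) (L (i + 2^t) (t+1)) \<and>
    u i (t+1) = (u i t \<noteq> u (i + 2^t) t) \<and>
    u (i + 2^t) (t+1) = u (i + 2^t) t"
  using assms unfolding sc_system_def by blast

definition upper_half :: "nat \<Rightarrow> nat set \<Rightarrow> nat set" where
  "upper_half k I = {j. j + 2^k \<in> I}"

definition lower_llr :: "nat \<Rightarrow> (nat \<Rightarrow> real) \<Rightarrow> nat \<Rightarrow> real" where
  "lower_llr k y j = sc_f (y j) (y (j + 2^k))"

definition upper_llr :: "nat \<Rightarrow> (nat \<Rightarrow> bool) \<Rightarrow> (nat \<Rightarrow> real) \<Rightarrow> nat \<Rightarrow> real" where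
  "upper_llr k v y j = sc_g (v j) (y j) (y (j + 2^k))"

lemma sc_system_top:
  assumes S: "sc_system (Suc k) I y L u" and j: "j < 2^k"
  shows "L j k = lower_llr k y j"
    and "L (j + 2^k) k = upper_llr k (\<lambda>i. u i k) y j"
    and "u j (Suc k) = (u j k \<noteq> u (j + 2^k) k)"
    and "u (j + 2^k) (Suc k) = u (j + 2^k) k"
proof -
  have in_range: "j < 2^Suc k" "j + 2^k < 2^Suc k" "even (j div 2^k)" using j by auto
  note top = sc_system_stage[OF S lessI in_range(1,3)]
  show "L j k = lower_llr k y j" "L (j + 2^k) k = upper_llr k (\<lambda>i. u i k) y j"
    "u j (Suc k) = (u j k \<noteq> u (j + 2^k) k)" "u (j + 2^k) (Suc k) = u (j + 2^k) k"
    using top sc_system_input[OF S in_range(1)] sc_system_input[OF S in_range(2)]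
    by (simp_all add: lower_llr_def upper_llr_def)
qed

lemma sc_system_Suc_lower:
  assumes S: "sc_system (Suc k) I y L u"
  shows "sc_system k I (lower_llr k y) L u"
proof (rule sc_systemI)
  fix t i :: nat assume "t < k" "i < 2^k" "even (i div 2^t)"
  then show "L i t = sc_f (L i (t+1)) (L (i + 2^t) (t+1)) \<and>
    L (i + 2^t) t = sc_g (u i t) (L i (t+1)) (L (i + 2^t) (t+1)) \<and>
    u i (t+1) = (u i t \<noteq> u (i + 2^t) t) \<and> u (i + 2^t) (t+1) = u (i + 2^t) t"
    using sc_system_stage[OF S] by simp
qed (use sc_system_top(1)[OF S] sc_system_decision[OF S] in auto)

lemma sc_system_Suc_upper:
  assumes S: "sc_system (Suc k) I y L u"
  shows "sc_system k (upper_half k I) (upper_llr k (\<lambda>i. u i k) y)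
    (\<lambda>j t. L (j + 2^k) t) (\<lambda>j t. u (j + 2^k) t)"
proof (rule sc_systemI)
  fix t i :: nat assume t: "t < k" and i: "i < 2^k" "even (i div 2^t)"
  have in_range: "i + 2^k < 2^Suc k" "even ((i + 2^k) div 2^t)"
    using i even_div_add_pow2[OF t] by auto
  have swap: "i + 2^k + 2^t = i + 2^t + 2^k" by simp
  show "L (i + 2^k) t = sc_f (L (i + 2^k) (t+1)) (L (i + 2^t + 2^k) (t+1)) \<and>
    L (i + 2^t + 2^k) t = sc_g (u (i + 2^k) t) (L (i + 2^k) (t+1)) (L (i + 2^t + 2^k) (t+1)) \<and>
    u (i + 2^k) (t+1) = (u (i + 2^k) t \<noteq> u (i + 2^t + 2^k) t) \<and>
    u (i + 2^t + 2^k) (t+1) = u (i + 2^t + 2^k) t"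
    using sc_system_stage[OF S _ in_range] t unfolding swap by simp
next
  fix i :: nat assume "i < 2^k"
  then show "u (i + 2^k) 0 = (i \<in> upper_half k I \<and> L (i + 2^k) 0 < 0)"
    using sc_system_decision[OF S, of "i + 2^k"] by (simp add: upper_half_def)
qed (use sc_system_top(2)[OF S] in auto)

lemma sc_system_SucI:
  assumes S1: "sc_system k I (lower_llr k y) L1 u1"
    and S2: "sc_system k (upper_half k I) (upper_llr k (\<lambda>i. u1 i k) y) L2 u2"
  shows "\<exists>L u. sc_system (Suc k) I y L u"
proof -
  define L where "L i t = (if t = Suc k then y i else if i < 2^k then L1 i t else L2 (i - 2^k) t)"
    for i t
  define u where "u i t = (if t = Suc k then (if i < 2^k then u1 i k \<noteq> u2 i k else u2 (i - 2^k) k)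
      else if i < 2^k then u1 i t else u2 (i - 2^k) t)" for i t
  have "sc_system (Suc k) I y L u"
  proof (rule sc_systemI)
    fix i :: nat assume i: "i < 2^Suc k"
    show "u i 0 = (i \<in> I \<and> L i 0 < 0)"
    proof (cases "i < 2^k")
      case True
      then show ?thesis using sc_system_decision[OF S1 True] by (simp add: u_def L_def)
    next
      case False
      then have "i - 2^k < 2^k" using i by auto
      then show ?thesis using sc_system_decision[OF S2] False by (simp add: u_def L_def upper_half_def)
    qed
  next
    fix t i :: nat assume t: "t < Suc k" and i: "i < 2^Suc k" "even (i div 2^t)"
    show "L i t = sc_f (L i (t+1)) (L (i + 2^t) (t+1)) \<and>
      L (i + 2^t) t = sc_g (u i t) (L i (t+1)) (L (i + 2^t) (t+1)) \<and>
      u i (t+1) = (u i t \<noteq> u (i + 2^t) t) \<and> u (i + 2^t) (t+1) = u (i + 2^t) t"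
    proof (cases "t = k")
      case True
      with i have "i < 2^k" using less_pow2_if_even_div by blast
      then show ?thesis using sc_system_input[OF S1] sc_system_input[OF S2]
        by (simp add: True L_def u_def lower_llr_def upper_llr_def)
    next
      case False
      then have t: "t < k" using t by simp
      show ?thesis
      proof (cases "i < 2^k")
        case True
        then show ?thesis using sc_system_stage[OF S1 t True i(2)] add_pow2_less[OF t True i(2)] t
          by (simp add: L_def u_def)
      next
        case False
        define j where "j = i - 2^k"
        have j: "i = j + 2^k" "j < 2^k" using i(1) False unfolding j_def by auto
        have "even (j div 2^t)" using i(2) even_div_add_pow2[OF t, of j] j(1) by simp
        moreover have "i + 2^t - 2^k = j + 2^t" "\<not> i + 2^t < 2^k" using j by auto
        ultimately show ?thesis using sc_system_stage[OF S2 t j(2)] t False j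
          by (simp add: L_def u_def)
      qed
    qed
  qed (simp add: L_def)
  then show ?thesis by blast
qed

lemma sc_system_exists: "\<exists>L u. sc_system k I y L u"
proof (induction k arbitrary: I y)
  case 0
  have "sc_system 0 I y (\<lambda>i t. y i) (\<lambda>i t. i \<in> I \<and> y i < 0)"
    by (rule sc_systemI) auto
  then show ?case by blast
next
  case (Suc k)
  obtain L1 u1 where "sc_system k I (lower_llr k y) L1 u1" using Suc.IH by blast
  moreover obtain L2 u2 where "sc_system k (upper_half k I) (upper_llr k (\<lambda>i. u1 i k) y) L2 u2"
    using Suc.IH by blast
  ultimately show ?case by (rule sc_system_SucI)
qed

lemma sc_system_unique:
  "sc_system k I y L u \<Longrightarrow> sc_system k I y L' u' \<Longrightarrow> i < 2^k \<Longrightarrow> u i k = u' i k"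
proof (induction k arbitrary: I y L u L' u' i)
  case 0
  then show ?case
    using sc_system_decision[OF "0.prems"(1)] sc_system_input[OF "0.prems"(1)]
      sc_system_decision[OF "0.prems"(2)] sc_system_input[OF "0.prems"(2)] by simp
next
  case (Suc k)
  note S = Suc.prems(1) and S' = Suc.prems(2)
  have lower: "\<forall>j<2^k. u j k = u' j k"
    using Suc.IH[OF sc_system_Suc_lower[OF S] sc_system_Suc_lower[OF S']] by blast
  have "sc_system k (upper_half k I) (upper_llr k (\<lambda>i. u i k) y)
      (\<lambda>j t. L' (j + 2^k) t) (\<lambda>j t. u' (j + 2^k) t)"
    using sc_system_Suc_upper[OF S'] by (rule sc_system_cong) (simp_all add: lower upper_llr_def)
  then have upper: "\<forall>j<2^k. u (j + 2^k) k = u' (j + 2^k) k"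
    using Suc.IH[OF sc_system_Suc_upper[OF S]] by blast
  from Suc.prems(3) show ?case
    by (cases rule: less_pow2_Suc_cases)
      (simp_all add: sc_system_top(3,4)[OF S] sc_system_top(3,4)[OF S'] lower upper)
qed

lemma SC_sc_system:
  assumes S: "sc_system k I y L u" and i: "i < 2^k"
  shows "SC k I y i = u i k"
proof -
  have "(THE b. \<exists>L u. sc_system k I y L u \<and> u i k = b) = u i k"
    using S sc_system_unique[OF _ S i] by (intro the_equality) blast+
  then show ?thesis unfolding SC_def using i by simp
qed

lemma SC_out_of_range: "\<not> i < 2^k \<Longrightarrow> \<not> SC k I y i"
  unfolding SC_def by simp

lemma SC_cong:
  assumes "\<forall>i<2^k. y i = y' i" "\<forall>i<2^k. i \<in> I \<longleftrightarrow> i \<in> I'"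
  shows "SC k I y = SC k I' y'"
proof
  fix i
  obtain L u where S: "sc_system k I y L u" using sc_system_exists by blast
  then have S': "sc_system k I' y' L u" using sc_system_cong assms by blast
  show "SC k I y i = SC k I' y' i"
    by (cases "i < 2^k") (simp_all add: SC_sc_system[OF S] SC_sc_system[OF S'] SC_out_of_range)
qed

lemma SC_Suc:
  fixes I :: "nat set" and y :: "nat \<Rightarrow> real"
  assumes j: "j < 2^k"
  defines "v \<equiv> SC k I (lower_llr k y)"
  shows "SC (Suc k) I y j = (v j \<noteq> SC k (upper_half k I) (upper_llr k v y) j)"
    and "SC (Suc k) I y (j + 2^k) = SC k (upper_half k I) (upper_llr k v y) j"
proof -
  obtain L u where S: "sc_system (Suc k) I y L u" using sc_system_exists by blast
  have lower: "\<forall>i<2^k. v i = u i k"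
    using SC_sc_system[OF sc_system_Suc_lower[OF S]] unfolding v_def by blast
  have "sc_system k (upper_half k I) (upper_llr k v y) (\<lambda>j t. L (j + 2^k) t) (\<lambda>j t. u (j + 2^k) t)"
    using sc_system_Suc_upper[OF S] by (rule sc_system_cong) (simp_all add: lower upper_llr_def)
  then have upper: "SC k (upper_half k I) (upper_llr k v y) j = u (j + 2^k) k"
    using SC_sc_system j by blast
  have "j < 2^Suc k" "j + 2^k < 2^Suc k" using j by auto
  then show "SC (Suc k) I y j = (v j \<noteq> SC k (upper_half k I) (upper_llr k v y) j)"
    and "SC (Suc k) I y (j + 2^k) = SC k (upper_half k I) (upper_llr k v y) j"
    using SC_sc_system[OF S] sc_system_top(3,4)[OF S j] lower upper j by simp_all
qed

lemma SC_0: "SC 0 I y 0 = (0 \<in> I \<and> y 0 < 0)"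
proof -
  have "sc_system 0 I y (\<lambda>i t. y i) (\<lambda>i t. i \<in> I \<and> y i < 0)"
    by (rule sc_systemI) auto
  then show ?thesis using SC_sc_system by fastforce
qed

lemma SC_zero_input: "\<not> SC k I (\<lambda>_. 0) i"
proof -
  have "sc_f 0 0 = 0" by (simp add: sc_f_def)
  then have S: "sc_system k I (\<lambda>_. 0) (\<lambda>i t. 0) (\<lambda>i t. False)"
    by (intro sc_systemI) (auto simp: sc_g_def)
  show ?thesis by (cases "i < 2^k") (simp_all add: SC_sc_system[OF S] SC_out_of_range)
qed

section \<open>Sign behaviour of the update rules\<close>

lemma sc_f_sign:
  assumes "x \<noteq> 0" "y \<noteq> 0"
  shows "sc_f x y \<noteq> 0" and "sc_f x y < 0 \<longleftrightarrow> ((x < 0) \<noteq> (y < 0))"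
proof -
  define Q where "Q = (exp (x + y) + 1) / (exp x + exp y)"
  have den: "exp x + exp y > 0" by (simp add: add_pos_pos)
  have "Q > 0" unfolding Q_def using den by (simp add: add_pos_pos)
  then have f: "sc_f x y = ln Q" "sc_f x y < 0 \<longleftrightarrow> Q < 1" "sc_f x y = 0 \<longleftrightarrow> Q = 1"
    unfolding sc_f_def Q_def by simp_all
  have "exp (x + y) + 1 - (exp x + exp y) = (exp x - 1) * (exp y - 1)"
    by (simp add: exp_add algebra_simps)
  then have Q: "Q - 1 = (exp x - 1) * (exp y - 1) / (exp x + exp y)"
    unfolding Q_def using den by (simp add: field_simps)
  have "exp x - 1 < 0 \<longleftrightarrow> x < 0" "exp x - 1 \<noteq> 0" "exp y - 1 < 0 \<longleftrightarrow> y < 0" "exp y - 1 \<noteq> 0"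
    using assms by auto
  then have "Q - 1 \<noteq> 0" "Q - 1 < 0 \<longleftrightarrow> ((x < 0) \<noteq> (y < 0))"
    unfolding Q using den by (auto simp: divide_less_0_iff mult_less_0_iff)
  then show "sc_f x y \<noteq> 0" "sc_f x y < 0 \<longleftrightarrow> ((x < 0) \<noteq> (y < 0))"
    using f by auto
qed

definition hard_decisions :: "nat \<Rightarrow> (nat \<Rightarrow> real) \<Rightarrow> (nat \<Rightarrow> bool) \<Rightarrow> bool" where
  "hard_decisions k x c \<longleftrightarrow> (\<forall>i<2^k. x i \<noteq> 0 \<and> (x i < 0 \<longleftrightarrow> c i))"

text \<open>The output of \<open>SC k J w\<close> is a codeword of \<open>C(J) \<subseteq> C(J')\<close>; on an input whose signs
  spell out that codeword, every stage of the decoder \<open>SC k J'\<close> sees the signs of the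
  corresponding intermediate bits, so it returns the codeword itself.\<close>

lemma SC_hard_decisions:
  assumes "\<forall>i<2^k. i \<in> J \<longrightarrow> i \<in> J'" "hard_decisions k x (SC k J w)"
  shows "SC k J' x = SC k J w"
  using assms
proof (induction k arbitrary: J J' w x)
  case 0
  show ?case
  proof
    fix i
    show "SC 0 J' x i = SC 0 J w i"
      using 0 by (cases "i = 0") (auto simp: hard_decisions_def SC_0 SC_out_of_range)
  qed
next
  case (Suc k)
  define a where "a = SC k J (lower_llr k w)"
  define b where "b = SC k (upper_half k J) (upper_llr k a w)"
  have x_lower: "x j \<noteq> 0 \<and> (x j < 0 \<longleftrightarrow> (a j \<noteq> b j))"
    and x_upper: "x (j + 2^k) \<noteq> 0 \<and> (x (j + 2^k) < 0 \<longleftrightarrow> b j)" if "j < 2^k" for j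
  proof -
    have "j < 2^Suc k" "j + 2^k < 2^Suc k" using that by auto
    then show "x j \<noteq> 0 \<and> (x j < 0 \<longleftrightarrow> (a j \<noteq> b j))"
      and "x (j + 2^k) \<noteq> 0 \<and> (x (j + 2^k) < 0 \<longleftrightarrow> b j)"
      using Suc.prems(2) SC_Suc[OF that, of J w] unfolding hard_decisions_def a_def b_def by simp_all
  qed
  have "hard_decisions k (lower_llr k x) a"
    unfolding hard_decisions_def lower_llr_def
    using x_lower x_upper sc_f_sign[of "x _" "x (_ + 2^k)"] by auto
  then have A: "SC k J' (lower_llr k x) = a"
    using Suc.IH[of J J'] Suc.prems(1) unfolding a_def by simp
  have "hard_decisions k (upper_llr k a x) b"
    unfolding hard_decisions_def upper_llr_def sc_g_def
  proof (intro allI impI)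
    fix j :: nat assume "j < 2^k"
    then show "(if a j then - x j else x j) + x (j + 2^k) \<noteq> 0 \<and>
        ((if a j then - x j else x j) + x (j + 2^k) < 0 \<longleftrightarrow> b j)"
      using x_lower[of j] x_upper[of j] by (cases "a j"; cases "b j") auto
  qed
  then have B: "SC k (upper_half k J') (upper_llr k a x) = b"
    using Suc.IH[of "upper_half k J" "upper_half k J'"] Suc.prems(1)
    unfolding b_def by (simp add: upper_half_def)
  show ?case
  proof
    fix i
    show "SC (Suc k) J' x i = SC (Suc k) J w i"
    proof (cases "i < 2^Suc k")
      case True
      then show ?thesis
        by (cases rule: less_pow2_Suc_cases) (simp_all add: SC_Suc A B flip: a_def b_def)
    qed (simp add: SC_out_of_range)
  qed
qed

lemma sc_f_neg_right: "sc_f x (- y) = - sc_f x y"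
proof -
  have frac: "(a / b + 1) / (a + 1 / b) = (a + b) / (a * b + 1)" if "a > 0" "b > 0" for a b :: real
  proof -
    have "a / b + 1 = (a + b) / b" "a + 1 / b = (a * b + 1) / b"
      using that by (simp_all add: field_simps)
    then show ?thesis using that by simp
  qed
  have "(exp (x + - y) + 1) / (exp x + exp (- y)) = (exp x + exp y) / (exp (x + y) + 1)"
    using frac[of "exp x" "exp y"] by (simp add: exp_add exp_diff exp_minus inverse_eq_divide)
  then show ?thesis
    unfolding sc_f_def by (simp add: ln_div add_pos_pos)
qed

lemma sc_f_diag_gt: "C - 1 < sc_f C C"
proof -
  have "exp C / 2 < (exp C * exp C + 1) / (exp C + exp C)"
    by (simp add: field_simps)
  then have "ln (exp C / 2) < sc_f C C"
    unfolding sc_f_def exp_add by (subst ln_less_cancel_iff) (auto simp: add_pos_pos)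
  then show ?thesis
    using ln_2_less_1 by (simp add: ln_div)
qed

lemma continuous_on_sc_f: "continuous_on S (sc_f x)"
  unfolding sc_f_def by (intro continuous_intros) (auto simp: add_nonneg_eq_0_iff)

text \<open>\<open>sc_f C\<close> is odd and increases from \<open>-C\<close> to \<open>C\<close>, and \<open>sc_f C C > C - 1\<close>, so by the
  intermediate value theorem it attains every value of modulus at most \<open>C - 1\<close> inside \<open>(-C, C)\<close>.\<close>

lemma sc_f_solve:
  assumes "\<bar>w\<bar> \<le> C - 1"
  obtains r where "sc_f C r = w" "\<bar>r\<bar> < C"
proof -
  have "sc_f C (- C) \<le> w" "w \<le> sc_f C C" "- C \<le> C"
    using assms sc_f_diag_gt[of C] by (auto simp: sc_f_neg_right)
  then obtain r where r: "- C \<le> r" "r \<le> C" "sc_f C r = w"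
    using IVT'[of "sc_f C"] continuous_on_sc_f by blast
  have "r \<noteq> C" "r \<noteq> - C"
    using r(3) assms sc_f_diag_gt[of C] by (auto simp: sc_f_neg_right)
  with r show ?thesis using that by fastforce
qed

lemma sc_f_solve_uniform:
  fixes w :: "nat \<Rightarrow> real"
  obtains C r where "\<forall>i<n. sc_f C (r i) = w i \<and> \<bar>r i\<bar> < C"
proof -
  define C where "C = (\<Sum>i<n. \<bar>w i\<bar>) + 1"
  have "\<bar>w i\<bar> \<le> C - 1" if "i < n" for i
    unfolding C_def using that by (simp add: member_le_sum[of i "{..<n}" "\<lambda>i. \<bar>w i\<bar>"])
  then have "\<forall>i<n. \<exists>r. sc_f C r = w i \<and> \<bar>r\<bar> < C"
    using sc_f_solve by metis
  then show ?thesis using that by metis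
qed

section \<open>The permutation \<open>\<phi>(M)\<close> of an upper-triangular matrix\<close>

lemma index_of_Suc: "index_of (Suc k) a = index_of k a + 2^k * (if a (Suc k) then 0 else 1)"
  unfolding index_of_def by simp

lemma index_of_less: "index_of k a < 2^k"
  by (induction k) (auto simp: index_of_Suc, simp add: index_of_def)

lemma index_of_cong: "(\<And>i. i \<in> {1..k} \<Longrightarrow> a i = b i) \<Longrightarrow> index_of k a = index_of k b"
  unfolding index_of_def by (rule sum.cong) auto

lemma index_of_avec: "k \<le> m \<Longrightarrow> index_of k (avec m z) = z mod 2^k"
proof (induction k)
  case 0
  then show ?case unfolding index_of_def by simp
next
  case (Suc k)
  have "z mod 2^Suc k = z mod 2^k + 2^k * (z div 2^k mod 2)"
    using mod_mult2_eq'[of z "2^k" 2] by (simp add: mult.commute)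
  moreover have "avec m z (Suc k) \<longleftrightarrow> z div 2^k mod 2 = 0"
    unfolding avec_def using Suc.prems by (simp add: bit_iff_odd even_iff_mod_2_eq_zero)
  ultimately show ?case
    using Suc by (cases "z div 2^k mod 2 = 0") (auto simp: index_of_Suc mod2_eq_if)
qed

lemma matvec_cong: "(\<And>i. i \<in> {1..k} \<Longrightarrow> a i = b i) \<Longrightarrow> matvec k M a = matvec k M b"
proof -
  assume "\<And>i. i \<in> {1..k} \<Longrightarrow> a i = b i"
  then have "\<And>i. {j \<in> {1..k}. M i j \<and> a j} = {j \<in> {1..k}. M i j \<and> b j}" by auto
  then show ?thesis unfolding matvec_def by simp
qed

lemma matvec_last:
  assumes "upper_triangular (Suc k) M"
  shows "matvec (Suc k) M a (Suc k) = a (Suc k)"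
proof -
  have "M (Suc k) (Suc k)" "\<And>j. j \<in> {1..k} \<Longrightarrow> \<not> M (Suc k) j"
    using assms unfolding upper_triangular_def by auto
  then have "{j \<in> {1..Suc k}. M (Suc k) j \<and> a j} = (if a (Suc k) then {Suc k} else {})"
    by (auto simp: le_Suc_eq)
  then show ?thesis unfolding matvec_def by simp
qed

lemma matvec_Suc_drop:
  assumes "\<not> a (Suc k)" "i \<in> {1..k}"
  shows "matvec (Suc k) M a i = matvec k M a i"
proof -
  have "{j \<in> {1..Suc k}. M i j \<and> a j} = {j \<in> {1..k}. M i j \<and> a j}"
    using assms(1) by (auto simp: le_Suc_eq)
  then show ?thesis unfolding matvec_def using assms(2) by simp
qed

lemma phi_less: "phi k M i < 2^k"
  unfolding phi_def by (rule index_of_less)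

text \<open>An upper-triangular \<open>M\<close> fixes the last coordinate \<open>a\<^bsub>k+1\<^esub>\<close>, so \<open>\<phi>(M)\<close> preserves both
  halves of the index range.\<close>

lemma phi_Suc_lower:
  assumes "upper_triangular (Suc k) M" "i < 2^k"
  shows "phi (Suc k) M i < 2^k"
proof -
  have "avec (Suc k) i (Suc k)" unfolding avec_def using not_bit_less_pow2[OF assms(2)] by simp
  then have "matvec (Suc k) M (avec (Suc k) i) (Suc k)" using matvec_last[OF assms(1)] by simp
  then show ?thesis unfolding phi_def index_of_Suc using index_of_less by simp
qed

lemma phi_Suc_upper:
  assumes "upper_triangular (Suc k) M" "i < 2^k"
  shows "phi (Suc k) M (i + 2^k) = phi k M i + 2^k"
proof -
  define a where "a = avec (Suc k) (i + 2^k)"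
  have last: "\<not> a (Suc k)" unfolding a_def avec_def using bit_add_pow2_top[OF assms(2)] by simp
  have init: "\<And>j. j \<in> {1..k} \<Longrightarrow> a j = avec k i j"
    unfolding a_def avec_def using bit_add_pow2_low by auto
  have "index_of k (matvec (Suc k) M a) = index_of k (matvec k M (avec k i))"
    using matvec_Suc_drop[of a k, OF last] matvec_cong[of k a "avec k i" M, OF init]
    by (intro index_of_cong) simp
  then show ?thesis
    unfolding phi_def a_def[symmetric] index_of_Suc using matvec_last[OF assms(1)] last by simp
qed

lemma sub_info_True_iff:
  assumes "info_set (Suc k) I" "i < 2^k"
  shows "i \<in> sub_info (Suc k) I True \<longleftrightarrow> i \<in> I"
proof
  assume "i \<in> sub_info (Suc k) I True"
  then obtain z where z: "i = index_of k (avec (Suc k) z)" "z \<in> I" "avec (Suc k) z (Suc k)"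
    unfolding sub_info_def by auto
  have "z < 2^Suc k" using z(2) assms(1) unfolding info_set_def by auto
  then have "z < 2^k"
    by (cases rule: less_pow2_Suc_cases) (use z(3) in \<open>auto simp: avec_def bit_add_pow2_top\<close>)
  then show "i \<in> I" using z index_of_avec[of k "Suc k" z] by simp
next
  assume "i \<in> I"
  moreover have "avec (Suc k) i (Suc k)" unfolding avec_def using not_bit_less_pow2[OF assms(2)] by simp
  moreover have "index_of k (avec (Suc k) i) = i" using index_of_avec[of k "Suc k" i] assms(2) by simp
  ultimately show "i \<in> sub_info (Suc k) I True" unfolding sub_info_def by force
qed

lemma sub_info_False_iff:
  assumes "info_set (Suc k) I" "i < 2^k"
  shows "i \<in> sub_info (Suc k) I False \<longleftrightarrow> i \<in> upper_half k I"
proof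
  assume "i \<in> sub_info (Suc k) I False"
  then obtain z where z: "i = index_of k (avec (Suc k) z)" "z \<in> I" "\<not> avec (Suc k) z (Suc k)"
    unfolding sub_info_def by auto
  have "z < 2^Suc k" using z(2) assms(1) unfolding info_set_def by auto
  then obtain j where "j < 2^k" "z = j + 2^k"
    by (cases rule: less_pow2_Suc_cases) (use z(3) in \<open>auto simp: avec_def not_bit_less_pow2\<close>)
  then show "i \<in> upper_half k I" using z index_of_avec[of k "Suc k" z] by (simp add: upper_half_def)
next
  assume "i \<in> upper_half k I"
  moreover have "\<not> avec (Suc k) (i + 2^k) (Suc k)"
    unfolding avec_def using bit_add_pow2_top[OF assms(2)] by simp
  moreover have "index_of k (avec (Suc k) (i + 2^k)) = i"
    using index_of_avec[of k "Suc k" "i + 2^k"] assms(2) by simp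
  ultimately show "i \<in> sub_info (Suc k) I False" unfolding sub_info_def upper_half_def by force
qed

lemma decreasing_imp_upper:
  assumes "decreasing (Suc k) I" "i < 2^k" "i \<in> I"
  shows "i + 2^k \<in> I"
proof -
  have "supp (Suc k) (i + 2^k) \<subseteq> supp (Suc k) i"
  proof
    fix j assume "j \<in> supp (Suc k) (i + 2^k)"
    then have j: "j \<in> {1..Suc k}" "\<not> bit (i + 2^k) (j - 1)" unfolding supp_def avec_def by auto
    then have "j - 1 < k" using bit_add_pow2_top[OF assms(2)] by (cases "j = Suc k") auto
    then show "j \<in> supp (Suc k) i" using j bit_add_pow2_low unfolding supp_def avec_def by auto
  qed
  then have "mono_le (supp (Suc k) (i + 2^k)) (supp (Suc k) i)"
    unfolding mono_le_def by blast
  moreover have "i + 2^k < 2^Suc k" using assms(2) by simp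
  ultimately show ?thesis using assms(1,3) unfolding decreasing_def by blast
qed

section \<open>Commutation with the two half-length decoders\<close>

lemma commutes_SCI:
  assumes "\<And>y i. i < 2^k \<Longrightarrow> SC k J (perm_vec (2^k) p y) i = SC k J y (p i)"
  shows "commutes_SC k J p"
  unfolding commutes_SC_def
proof (intro allI ext)
  fix y i
  show "SC k J (perm_vec (2^k) p y) i = perm_vec (2^k) p (SC k J y) i"
    using assms[of i y] by (cases "i < 2^k") (simp_all add: perm_vec_def SC_out_of_range)
qed

lemma commutes_SC_cong:
  assumes "\<forall>i<2^k. i \<in> I \<longleftrightarrow> i \<in> I'"
  shows "commutes_SC k I p = commutes_SC k I' p"
proof -
  have "SC k I y = SC k I' y" for y
    using SC_cong[of k y y I I'] assms by simp
  then show ?thesis unfolding commutes_SC_def by simp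
qed

lemma SC_perm_upper:
  assumes ut: "upper_triangular (Suc k) M" and H: "commutes_SC (Suc k) I (phi (Suc k) M)"
    and i: "i < 2^k"
  shows "SC (Suc k) I (perm_vec (2^Suc k) (phi (Suc k) M) y) (i + 2^k)
    = SC (Suc k) I y (phi k M i + 2^k)"
  using H i phi_Suc_upper[OF ut i] unfolding commutes_SC_def perm_vec_def by simp

lemma SC_Suc_upper_zero_lower:
  assumes "\<forall>j<2^k. y j = 0 \<and> y (j + 2^k) = x j"
  shows "SC (Suc k) I y (j + 2^k) = SC k (upper_half k I) x j"
proof (cases "j < 2^k")
  case True
  have "SC k I (lower_llr k y) = SC k I (\<lambda>_. 0)"
    using assms by (intro SC_cong) (simp_all add: lower_llr_def sc_f_def add.commute)
  then have "SC k (upper_half k I) (upper_llr k (SC k I (lower_llr k y)) y) = SC k (upper_half k I) x"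
    using assms SC_zero_input by (intro SC_cong) (simp_all add: upper_llr_def sc_g_def)
  then show ?thesis using SC_Suc(2)[OF True] by simp
qed (simp add: SC_out_of_range)

text \<open>As \<open>\<bar>y (j + 2^k)\<bar> < C\<close>, each \<open>g\<close>-combined LLR has the sign of the corresponding lower
  decision.\<close>

lemma SC_Suc_upper_saturated_lower:
  assumes I: "\<forall>j<2^k. j \<in> I \<longrightarrow> j + 2^k \<in> I"
    and y: "\<forall>j<2^k. y j = C \<and> sc_f C (y (j + 2^k)) = w j \<and> \<bar>y (j + 2^k)\<bar> < C"
  shows "SC (Suc k) I y (j + 2^k) = SC k I w j"
proof (cases "j < 2^k")
  case True
  have lower: "SC k I (lower_llr k y) = SC k I w"
    using y by (intro SC_cong) (simp_all add: lower_llr_def)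
  have "hard_decisions k (upper_llr k (SC k I w) y) (SC k I w)"
    using y unfolding hard_decisions_def upper_llr_def sc_g_def by auto
  then have "SC k (upper_half k I) (upper_llr k (SC k I w) y) = SC k I w"
    using I by (intro SC_hard_decisions) (simp_all add: upper_half_def)
  then show ?thesis using SC_Suc(2)[OF True] lower by simp
qed (simp add: SC_out_of_range)

lemma commutes_SC_upper_half:
  assumes ut: "upper_triangular (Suc k) M" and H: "commutes_SC (Suc k) I (phi (Suc k) M)"
  shows "commutes_SC k (upper_half k I) (phi k M)"
proof (rule commutes_SCI)
  fix x :: "nat \<Rightarrow> real" and i :: nat assume i: "i < 2^k"
  define y where "y j = (if j < 2^k then 0 else x (j - 2^k))" for j
  have "SC k (upper_half k I) (perm_vec (2^k) (phi k M) x) i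
      = SC (Suc k) I (perm_vec (2^Suc k) (phi (Suc k) M) y) (i + 2^k)"
    by (rule SC_Suc_upper_zero_lower[symmetric])
      (simp add: y_def perm_vec_def phi_Suc_lower[OF ut] phi_Suc_upper[OF ut] phi_less)
  also have "\<dots> = SC (Suc k) I y (phi k M i + 2^k)"
    by (rule SC_perm_upper[OF ut H i])
  also have "\<dots> = SC k (upper_half k I) x (phi k M i)"
    by (rule SC_Suc_upper_zero_lower) (simp add: y_def)
  finally show "SC k (upper_half k I) (perm_vec (2^k) (phi k M) x) i
      = SC k (upper_half k I) x (phi k M i)" .
qed

lemma commutes_SC_lower_half:
  assumes ut: "upper_triangular (Suc k) M" and H: "commutes_SC (Suc k) I (phi (Suc k) M)"
    and I: "\<forall>j<2^k. j \<in> I \<longrightarrow> j + 2^k \<in> I"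
  shows "commutes_SC k I (phi k M)"
proof (rule commutes_SCI)
  fix w :: "nat \<Rightarrow> real" and i :: nat assume i: "i < 2^k"
  obtain C r where r: "\<forall>j<2^k. sc_f C (r j) = w j \<and> \<bar>r j\<bar> < C"
    using sc_f_solve_uniform by blast
  define y where "y j = (if j < 2^k then C else r (j - 2^k))" for j
  have "SC k I (perm_vec (2^k) (phi k M) w) i
      = SC (Suc k) I (perm_vec (2^Suc k) (phi (Suc k) M) y) (i + 2^k)"
    by (rule SC_Suc_upper_saturated_lower[OF I, where C = C, symmetric])
      (simp add: r y_def perm_vec_def phi_Suc_lower[OF ut] phi_Suc_upper[OF ut] phi_less)
  also have "\<dots> = SC (Suc k) I y (phi k M i + 2^k)"
    by (rule SC_perm_upper[OF ut H i])
  also have "\<dots> = SC k I w (phi k M i)"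
    by (rule SC_Suc_upper_saturated_lower[OF I, where C = C]) (simp add: r y_def)
  finally show "SC k I (perm_vec (2^k) (phi k M) w) i = SC k I w (phi k M i)" .
qed

theorem lemma3:
  fixes m :: nat and I :: "nat set" and M :: "nat \<Rightarrow> nat \<Rightarrow> bool"
  assumes "m \<ge> 1"
    and "info_set m I"
    and "decreasing m I"
    and "upper_triangular m M"
    and "is_automorphism (2^m) (phi m M) (code m I)"
    and "commutes_SC m I (phi m M)"
  shows "commutes_SC (m - 1) (sub_info m I True) (phi (m - 1) M)
       \<and> commutes_SC (m - 1) (sub_info m I False) (phi (m - 1) M)"
proof -
  obtain k where m: "m = Suc k" using assms(1) by (cases m) auto
  have "commutes_SC k I (phi k M)"
    using commutes_SC_lower_half assms(4,6) decreasing_imp_upper[OF assms(3)[unfolded m]]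
    unfolding m by blast
  moreover have "commutes_SC k (upper_half k I) (phi k M)"
    using commutes_SC_upper_half assms(4,6) unfolding m by blast
  ultimately show ?thesis
    using sub_info_True_iff sub_info_False_iff assms(2) commutes_SC_cong
    unfolding m by (metis diff_Suc_1)
qed

end
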